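(* Let $A$ be a ring of Krull dimension $d$ and let $s\in A$ be a non-zero divisor such that $\dim(A_s)\le d-1$. Then there exists a generalized dimension function $\delta:\operatorname{Spec}(A)\to\mathbb N$ such that $\delta(\mathfrak p)\le d-1$ for all $\mathfrak p\in\operatorname{Spec}(A)$ and $\delta(\mathfrak p)=\dim(A/\mathfrak p)$ for every prime $\mathfrak p$ containing $s$.
   Context: Rings are commutative Noetherian with $1\ne0$ of finite Krull dimension. For $\mathcal S\subset\operatorname{Spec}(A)$ and a function $\delta:\mathcal S\to\mathbb N$, define a partial order on $\mathcal S$ by $\mathfrak p\ll\mathfrak q$ iff $\mathfrak p\subset\mathfrak q$ and $\delta(\mathfrak p)>\delta(\mathfrak q)$. $\delta$ is called a generalized dimension function if for every ideal $I\subset A$ the set $V(I)\cap\mathcal S$ has only finitely many minimal elements with respect to $\ll$. *)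

theory Defs
  imports Main "HOL-Library.Extended_Nat"
begin

(* Ideals of a commutative ring with 1 (type-class idiom: the ring is the type 'a) *)
definition is_ideal :: "'a::comm_ring_1 set \<Rightarrow> bool" where
  "is_ideal I \<longleftrightarrow> 0 \<in> I \<and> (\<forall>x\<in>I. \<forall>y\<in>I. x + y \<in> I) \<and> (\<forall>x\<in>I. - x \<in> I)
     \<and> (\<forall>r. \<forall>x\<in>I. r * x \<in> I)"

definition is_prime_ideal :: "'a::comm_ring_1 set \<Rightarrow> bool" where
  "is_prime_ideal P \<longleftrightarrow> is_ideal P \<and> P \<noteq> UNIV \<and> (\<forall>a b. a * b \<in> P \<longrightarrow> a \<in> P \<or> b \<in> P)"

definition Spec :: "'a::comm_ring_1 set set" where
  "Spec = {P. is_prime_ideal P}"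

definition V :: "'a::comm_ring_1 set \<Rightarrow> 'a set set" where
  "V I = {P \<in> Spec. I \<subseteq> P}"

definition noetherian_ring :: "'a::comm_ring_1 itself \<Rightarrow> bool" where
  "noetherian_ring _ \<longleftrightarrow>
     (\<forall>f :: nat \<Rightarrow> 'a set. (\<forall>n. is_ideal (f n)) \<and> (\<forall>n. f n \<subseteq> f (Suc n))
        \<longrightarrow> (\<exists>N. \<forall>n\<ge>N. f n = f N))"

definition has_chain :: "'a set set \<Rightarrow> nat \<Rightarrow> bool" where
  "has_chain S n \<longleftrightarrow> (\<exists>c :: nat \<Rightarrow> 'a set. (\<forall>i\<le>n. c i \<in> S) \<and> (\<forall>i<n. c i \<subset> c (Suc i)))"

(* dimension (supremum of lengths of chains) of a set of primes; 0 if the set is empty *)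
definition chain_dim :: "'a set set \<Rightarrow> enat" where
  "chain_dim S = Sup {enat n | n. has_chain S n}"

definition krull_dim :: "'a::comm_ring_1 itself \<Rightarrow> enat" where
  "krull_dim _ = chain_dim (Spec :: 'a set set)"

(* dim(A_s): Spec(A_s) is identified with the primes of A not containing s *)
definition dim_localization :: "'a::comm_ring_1 \<Rightarrow> enat" where
  "dim_localization s = chain_dim {P \<in> Spec. s \<notin> P}"

(* dim(A/p): Spec(A/p) is identified with the primes of A containing p *)
definition dim_quotient :: "'a::comm_ring_1 set \<Rightarrow> enat" where
  "dim_quotient p = chain_dim {P \<in> Spec. p \<subseteq> P}"

definition dll :: "('a set \<Rightarrow> nat) \<Rightarrow> 'a set \<Rightarrow> 'a set \<Rightarrow> bool" where
  "dll \<delta> p q \<longleftrightarrow> p \<subseteq> q \<and> \<delta> p > \<delta> q"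

definition dll_minimal :: "('a set \<Rightarrow> nat) \<Rightarrow> 'a set set \<Rightarrow> 'a set set" where
  "dll_minimal \<delta> T = {p \<in> T. \<not> (\<exists>q\<in>T. dll \<delta> q p)}"

definition gen_dim_fun :: "'a::comm_ring_1 set set \<Rightarrow> ('a set \<Rightarrow> nat) \<Rightarrow> bool" where
  "gen_dim_fun S \<delta> \<longleftrightarrow> S \<subseteq> Spec \<and> (\<forall>I. is_ideal I \<longrightarrow> finite (dll_minimal \<delta> (V I \<inter> S)))"

end

theory Submission
  imports Defs
begin

(* Let delta(p) be the length of the longest chain of primes above p that stays in the stratum of p,
   i.e. in V(s) if s is in p and in D(s) otherwise. Then delta(p) = dim(A/p) when s is in p, and
   delta(p) <= dim(A_s) <= d - 1 when s is not in p. A prime containing the non-zero divisor s is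
   not minimal, so a chain above it can be extended downwards in Spec(A): again delta(p) <= d - 1.
   Finally delta strictly decreases along proper inclusions inside a stratum, so a minimal element
   of V(I) for << is a minimal prime of I or of I + (s); a Noetherian ring has only finitely many. *)

lemma ideal_zero: "is_ideal I \<Longrightarrow> 0 \<in> I"
  unfolding is_ideal_def by blast

lemma ideal_add: "is_ideal I \<Longrightarrow> x \<in> I \<Longrightarrow> y \<in> I \<Longrightarrow> x + y \<in> I"
  unfolding is_ideal_def by blast

lemma ideal_uminus: "is_ideal I \<Longrightarrow> x \<in> I \<Longrightarrow> - x \<in> I"
  unfolding is_ideal_def by blast

lemma ideal_mult_left: "is_ideal I \<Longrightarrow> x \<in> I \<Longrightarrow> r * x \<in> I"
  unfolding is_ideal_def by blast

lemma prime_ideal_is_ideal: "is_prime_ideal P \<Longrightarrow> is_ideal P"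
  unfolding is_prime_ideal_def by blast

lemma prime_ideal_mult: "is_prime_ideal P \<Longrightarrow> a * b \<in> P \<Longrightarrow> a \<in> P \<or> b \<in> P"
  unfolding is_prime_ideal_def by blast

lemma prime_ideal_one_notin: "is_prime_ideal P \<Longrightarrow> (1::'a::comm_ring_1) \<notin> P"
  using ideal_mult_left[OF prime_ideal_is_ideal, of P 1] unfolding is_prime_ideal_def by auto

definition ideal_adjoin :: "'a::comm_ring_1 set \<Rightarrow> 'a \<Rightarrow> 'a set" where
  "ideal_adjoin I a = {x + r * a | x r. x \<in> I}"

lemma ideal_adjoin_iff: "z \<in> ideal_adjoin I a \<longleftrightarrow> (\<exists>x r. x \<in> I \<and> z = x + r * a)"
  unfolding ideal_adjoin_def by blast

lemma is_ideal_adjoin: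
  assumes I: "is_ideal I"
  shows "is_ideal (ideal_adjoin I a)"
  unfolding is_ideal_def
proof (intro conjI ballI allI)
  show "0 \<in> ideal_adjoin I a"
    unfolding ideal_adjoin_iff using ideal_zero[OF I] by (intro exI[of _ 0]) auto
next
  fix y z assume "y \<in> ideal_adjoin I a" "z \<in> ideal_adjoin I a"
  then obtain x1 r1 x2 r2 where "x1 \<in> I" "y = x1 + r1 * a" "x2 \<in> I" "z = x2 + r2 * a"
    unfolding ideal_adjoin_iff by blast
  then show "y + z \<in> ideal_adjoin I a"
    unfolding ideal_adjoin_iff
    by (intro exI[of _ "x1 + x2"] exI[of _ "r1 + r2"]) (simp add: ideal_add[OF I] algebra_simps)
next
  fix y assume "y \<in> ideal_adjoin I a"
  then obtain x1 r1 where "x1 \<in> I" "y = x1 + r1 * a" unfolding ideal_adjoin_iff by blast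
  then show "- y \<in> ideal_adjoin I a"
    unfolding ideal_adjoin_iff
    by (intro exI[of _ "- x1"] exI[of _ "- r1"]) (simp add: ideal_uminus[OF I])
next
  fix r y assume "y \<in> ideal_adjoin I a"
  then obtain x1 r1 where "x1 \<in> I" "y = x1 + r1 * a" unfolding ideal_adjoin_iff by blast
  then show "r * y \<in> ideal_adjoin I a"
    unfolding ideal_adjoin_iff
    by (intro exI[of _ "r * x1"] exI[of _ "r * r1"]) (simp add: ideal_mult_left[OF I] algebra_simps)
qed

lemma ideal_adjoin_subset: "I \<subseteq> ideal_adjoin I a"
  unfolding subset_iff ideal_adjoin_iff by (metis add.right_neutral mult_zero_left)

lemma ideal_adjoin_mem: "is_ideal I \<Longrightarrow> a \<in> ideal_adjoin I a"
  unfolding ideal_adjoin_iff by (intro exI[of _ 0] exI[of _ 1]) (simp add: ideal_zero)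

lemma ideal_adjoin_least: "is_ideal P \<Longrightarrow> I \<subseteq> P \<Longrightarrow> a \<in> P \<Longrightarrow> ideal_adjoin I a \<subseteq> P"
  unfolding subset_iff ideal_adjoin_iff by (metis ideal_add ideal_mult_left)

definition ideal_psupset :: "('a::comm_ring_1 set \<times> 'a set) set" where
  "ideal_psupset = {(J, I). is_ideal I \<and> is_ideal J \<and> I \<subset> J}"

lemma wf_ideal_psupset:
  assumes "noetherian_ring TYPE('a::comm_ring_1)"
  shows "wf (ideal_psupset :: ('a set \<times> 'a set) set)"
  unfolding wf_iff_no_infinite_down_chain
proof clarify
  fix f :: "nat \<Rightarrow> 'a set" assume f: "\<forall>i. (f (Suc i), f i) \<in> ideal_psupset"
  then have "(\<forall>n. is_ideal (f n)) \<and> (\<forall>n. f n \<subseteq> f (Suc n))"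
    unfolding ideal_psupset_def by auto
  then obtain N where N: "\<forall>n\<ge>N. f n = f N"
    using assms unfolding noetherian_ring_def by (elim allE[of _ f] impE) blast+
  have "f (Suc N) = f N" using N[rule_format, of "Suc N"] by simp
  moreover have "f N \<subset> f (Suc N)" using f unfolding ideal_psupset_def by auto
  ultimately show False by simp
qed

definition minimal_primes :: "'a::comm_ring_1 set \<Rightarrow> 'a set set" where
  "minimal_primes I = {P \<in> V I. \<forall>Q\<in>V I. Q \<subseteq> P \<longrightarrow> Q = P}"

lemma minimal_primes_larger_ideal:
  assumes "P \<in> minimal_primes I" "I \<subseteq> J" "J \<subseteq> P"
  shows "P \<in> minimal_primes J"
  using assms unfolding minimal_primes_def V_def by blast

lemma minimal_primes_subset_adjoin:
  assumes I: "is_ideal I" and ab: "a * b \<in> I"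
  shows "minimal_primes I \<subseteq> minimal_primes (ideal_adjoin I a) \<union> minimal_primes (ideal_adjoin I b)"
proof
  fix P assume P: "P \<in> minimal_primes I"
  then have prime: "is_prime_ideal P" and "I \<subseteq> P"
    unfolding minimal_primes_def V_def Spec_def by auto
  moreover have "a \<in> P \<or> b \<in> P" using prime_ideal_mult[OF prime] ab \<open>I \<subseteq> P\<close> by blast
  ultimately show "P \<in> minimal_primes (ideal_adjoin I a) \<union> minimal_primes (ideal_adjoin I b)"
    using minimal_primes_larger_ideal[OF P ideal_adjoin_subset]
      ideal_adjoin_least[OF prime_ideal_is_ideal] by blast
qed

lemma finite_minimal_primes:
  assumes noeth: "noetherian_ring TYPE('a::comm_ring_1)"
  shows "is_ideal (I::'a set) \<Longrightarrow> finite (minimal_primes I)"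
proof (induction I rule: wf_induct[OF wf_ideal_psupset[OF noeth]])
  case (1 I)
  note IH = "1.IH" and I = "1.prems"
  consider (prime) "is_prime_ideal I" | (unit) "I = UNIV"
    | (split) a b where "a * b \<in> I" "a \<notin> I" "b \<notin> I"
    using I unfolding is_prime_ideal_def by blast
  then show ?case
  proof cases
    case prime
    then have "minimal_primes I \<subseteq> {I}" unfolding minimal_primes_def V_def Spec_def by auto
    then show ?thesis using finite_subset by blast
  next
    case unit
    then have "minimal_primes I = {}"
      unfolding minimal_primes_def V_def Spec_def is_prime_ideal_def by auto
    then show ?thesis by simp
  next
    case (split a b)
    have "(ideal_adjoin I c, I) \<in> ideal_psupset" if "c \<notin> I" for c
      unfolding ideal_psupset_def using I that ideal_adjoin_subset ideal_adjoin_mem[of I c]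
      by (auto intro: is_ideal_adjoin)
    then have "finite (minimal_primes (ideal_adjoin I a))" "finite (minimal_primes (ideal_adjoin I b))"
      using IH split is_ideal_adjoin[OF I] by blast+
    then show ?thesis
      using minimal_primes_subset_adjoin[OF I \<open>a * b \<in> I\<close>] finite_subset by blast
  qed
qed

lemma maximal_disjoint_ideal_prime:
  assumes K: "is_ideal K" "K \<inter> S = {}"
    and max: "\<And>K'. is_ideal K' \<Longrightarrow> K \<subset> K' \<Longrightarrow> K' \<inter> S \<noteq> {}"
    and one: "1 \<in> S" and mult: "\<And>x y. x \<in> S \<Longrightarrow> y \<in> S \<Longrightarrow> x * y \<in> S"
  shows "is_prime_ideal (K::'a::comm_ring_1 set)"
proof -
  have meets: "\<exists>x r. x \<in> K \<and> x + r * a \<in> S" if "a \<notin> K" for a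
  proof -
    have "K \<subset> ideal_adjoin K a" using ideal_adjoin_subset ideal_adjoin_mem[OF K(1)] that by blast
    then have "ideal_adjoin K a \<inter> S \<noteq> {}" using max is_ideal_adjoin[OF K(1)] by blast
    then show ?thesis unfolding ideal_adjoin_def by blast
  qed
  have "a \<in> K \<or> b \<in> K" if ab: "a * b \<in> K" for a b
  proof (rule ccontr)
    assume "\<not> (a \<in> K \<or> b \<in> K)"
    then obtain x1 r1 x2 r2 where
      x: "x1 \<in> K" "x2 \<in> K" and S: "x1 + r1 * a \<in> S" "x2 + r2 * b \<in> S"
      using meets by blast
    have "(x1 + r1 * a) * (x2 + r2 * b) = (x2 + r2 * b) * x1 + (r1 * a) * x2 + (r1 * r2) * (a * b)"
      by (simp add: algebra_simps)
    also have "\<dots> \<in> K" using x ab K(1) by (simp add: ideal_add ideal_mult_left)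
    finally show False using mult[OF S] K(2) by blast
  qed
  moreover have "K \<noteq> UNIV" using one K(2) by blast
  ultimately show ?thesis unfolding is_prime_ideal_def using K(1) by blast
qed

lemma prime_ideal_disjoint_mult_closed:
  assumes noeth: "noetherian_ring TYPE('a::comm_ring_1)"
    and J: "is_ideal (J::'a set)" "J \<inter> S = {}"
    and one: "1 \<in> S" and mult: "\<And>x y. x \<in> S \<Longrightarrow> y \<in> S \<Longrightarrow> x * y \<in> S"
  obtains P where "is_prime_ideal P" "J \<subseteq> P" "P \<inter> S = {}"
proof -
  define F where "F = {K. is_ideal K \<and> J \<subseteq> K \<and> K \<inter> S = {}}"
  have "J \<in> F" using J unfolding F_def by blast
  then obtain K where "K \<in> F" and max: "\<And>K'. (K', K) \<in> ideal_psupset \<Longrightarrow> K' \<notin> F"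
    using wfE_min[OF wf_ideal_psupset[OF noeth]] by metis
  then have K: "is_ideal K" "J \<subseteq> K" "K \<inter> S = {}" unfolding F_def by auto
  have "K' \<inter> S \<noteq> {}" if "is_ideal K'" "K \<subset> K'" for K'
    using max[of K'] that K unfolding ideal_psupset_def F_def by blast
  then have "is_prime_ideal K" by (rule maximal_disjoint_ideal_prime[OF K(1,3) _ one mult])
  then show thesis using that K(2,3) by blast
qed

lemma nonzerodivisor_power:
  assumes "\<forall>x::'a::comm_ring_1. s * x = 0 \<longrightarrow> x = 0"
  shows "t * s ^ n = 0 \<Longrightarrow> t = 0"
proof (induction n arbitrary: t)
  case (Suc n)
  then show ?case using assms by (metis mult.assoc mult.commute power_Suc)
qed simp

lemma nonzerodivisor_prime_not_minimal:
  assumes noeth: "noetherian_ring TYPE('a::comm_ring_1)"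
    and nzd: "\<forall>x::'a. s * x = 0 \<longrightarrow> x = 0"
    and p: "p \<in> Spec" and sp: "s \<in> p"
  shows "\<exists>q\<in>Spec. q \<subset> p"
proof -
  have prime: "is_prime_ideal p" using p unfolding Spec_def by simp
  define S where "S = {t * s ^ n | t n. t \<notin> p}"
  have notin_p: "t \<in> S" if "t \<notin> p" for t
    unfolding S_def using that by (intro CollectI exI[of _ t] exI[of _ 0]) simp
  have "1 \<in> S" using notin_p prime_ideal_one_notin[OF prime] by blast
  moreover have "x * y \<in> S" if xy: "x \<in> S" "y \<in> S" for x y
  proof -
    obtain t1 n1 t2 n2 where "x = t1 * s ^ n1" "y = t2 * s ^ n2" "t1 \<notin> p" "t2 \<notin> p"
      using xy unfolding S_def by blast
    moreover have "t1 * t2 \<notin> p" using prime_ideal_mult[OF prime] calculation(3,4) by blast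
    ultimately show ?thesis
      unfolding S_def
      by (intro CollectI exI[of _ "t1 * t2"] exI[of _ "n1 + n2"]) (simp add: power_add ac_simps)
  qed
  moreover have "{0} \<inter> S = {}"
    unfolding S_def using nonzerodivisor_power[OF nzd] ideal_zero[OF prime_ideal_is_ideal[OF prime]]
    by force
  moreover have "is_ideal {0::'a}" unfolding is_ideal_def by simp
  ultimately obtain q where q: "is_prime_ideal q" "q \<inter> S = {}"
    using prime_ideal_disjoint_mult_closed[OF noeth] by metis
  have "q \<subseteq> p" using q(2) notin_p by blast
  moreover have "s \<in> S"
    unfolding S_def using prime_ideal_one_notin[OF prime] by (intro CollectI exI[of _ 1] exI[of _ 1]) simp
  then have "s \<notin> q" using q(2) by blast
  ultimately show ?thesis using q(1) sp unfolding Spec_def by blast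
qed

lemma has_chain_mono: "has_chain S n \<Longrightarrow> S \<subseteq> T \<Longrightarrow> has_chain T n"
  unfolding has_chain_def by auto

lemma has_chain_extend_below:
  assumes "\<forall>i\<le>n. c i \<in> T" "\<forall>i<n. c i \<subset> c (Suc i)" "q \<in> T" "q \<subset> c 0"
  shows "has_chain T (Suc n)"
  unfolding has_chain_def
proof (intro exI[of _ "\<lambda>i. if i = 0 then q else c (i - 1)"] conjI allI impI)
  fix i assume "i \<le> Suc n"
  then show "(if i = 0 then q else c (i - 1)) \<in> T" using assms by auto
next
  fix i assume "i < Suc n"
  then show "(if i = 0 then q else c (i - 1)) \<subset> (if Suc i = 0 then q else c (Suc i - 1))"
    using assms by (cases i) auto
qed

lemma has_chain_le_krull_dim:
  assumes "krull_dim TYPE('a::comm_ring_1) = enat d" "S \<subseteq> (Spec::'a set set)" "has_chain S n"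
  shows "n \<le> d"
proof -
  have "enat n \<le> chain_dim (Spec::'a set set)"
    unfolding chain_dim_def using assms(2,3) has_chain_mono by (intro Sup_upper) blast
  then show ?thesis using assms(1) unfolding krull_dim_def by simp
qed

definition chain_length :: "'a set set \<Rightarrow> nat" where
  "chain_length S = Max {n. has_chain S n}"

lemma chain_length:
  assumes "S \<noteq> {}" and bounded: "\<And>n. has_chain S n \<Longrightarrow> n \<le> d"
  shows has_chain_chain_length: "has_chain S (chain_length S)"
    and chain_length_greatest: "has_chain S n \<Longrightarrow> n \<le> chain_length S"
    and chain_dim_eq_chain_length: "chain_dim S = enat (chain_length S)"
proof -
  define N where "N = {n. has_chain S n}"
  have fin: "finite N" unfolding N_def using bounded finite_nat_set_iff_bounded_le by blast
  obtain x where "x \<in> S" using assms(1) by auto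
  then have "0 \<in> N" unfolding N_def has_chain_def by (intro CollectI exI[of _ "\<lambda>_. x"]) auto
  then have ne: "N \<noteq> {}" by blast
  show "has_chain S (chain_length S)" using Max_in[OF fin ne] unfolding chain_length_def N_def by simp
  show "has_chain S n \<Longrightarrow> n \<le> chain_length S"
    using Max_ge[OF fin] unfolding chain_length_def N_def by simp
  have "chain_dim S = Sup (enat ` N)" unfolding chain_dim_def N_def by (simp add: image_Collect)
  also have "\<dots> = Max (enat ` N)" using fin ne by (intro cSup_eq_Max) auto
  also have "\<dots> = enat (Max N)"
    using fin ne by (intro mono_Max_commute[symmetric]) (auto simp: mono_def)
  finally show "chain_dim S = enat (chain_length S)" unfolding chain_length_def N_def .
qed

definition stratum_above :: "'a::comm_ring_1 \<Rightarrow> 'a set \<Rightarrow> 'a set set" where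
  "stratum_above s p = {P \<in> Spec. p \<subseteq> P \<and> (s \<in> p \<or> s \<notin> P)}"

definition stratum_dim :: "'a::comm_ring_1 \<Rightarrow> 'a set \<Rightarrow> nat" where
  "stratum_dim s p = chain_length (stratum_above s p)"

lemma stratum_dim:
  assumes dim: "krull_dim TYPE('a::comm_ring_1) = enat d" and p: "(p::'a set) \<in> Spec"
  shows has_chain_stratum_dim: "has_chain (stratum_above s p) (stratum_dim s p)"
    and stratum_dim_greatest: "has_chain (stratum_above s p) n \<Longrightarrow> n \<le> stratum_dim s p"
    and chain_dim_stratum_above: "chain_dim (stratum_above s p) = enat (stratum_dim s p)"
proof -
  have "p \<in> stratum_above s p" using p unfolding stratum_above_def by blast
  moreover have "stratum_above s p \<subseteq> Spec" unfolding stratum_above_def by blast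
  ultimately have ne: "stratum_above s p \<noteq> {}"
    and bounded: "\<And>n. has_chain (stratum_above s p) n \<Longrightarrow> n \<le> d"
    using has_chain_le_krull_dim[OF dim] by blast+
  show "has_chain (stratum_above s p) (stratum_dim s p)"
    unfolding stratum_dim_def by (rule has_chain_chain_length[OF ne bounded])
  show "has_chain (stratum_above s p) n \<Longrightarrow> n \<le> stratum_dim s p"
    unfolding stratum_dim_def by (rule chain_length_greatest[OF ne bounded])
  show "chain_dim (stratum_above s p) = enat (stratum_dim s p)"
    unfolding stratum_dim_def by (rule chain_dim_eq_chain_length[OF ne bounded])
qed

lemma has_chain_extend_stratum_dim:
  assumes dim: "krull_dim TYPE('a::comm_ring_1) = enat d" and p: "(p::'a set) \<in> Spec"
    and T: "stratum_above s p \<subseteq> T" "q \<in> T" and "q \<subset> p"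
  shows "has_chain T (Suc (stratum_dim s p))"
proof -
  obtain c where c: "\<forall>i\<le>stratum_dim s p. c i \<in> stratum_above s p"
    "\<forall>i<stratum_dim s p. c i \<subset> c (Suc i)"
    using has_chain_stratum_dim[where s = s, OF dim p] unfolding has_chain_def by blast
  have "c 0 \<in> stratum_above s p" using c(1) by simp
  then have "q \<subset> c 0" using \<open>q \<subset> p\<close> unfolding stratum_above_def by blast
  moreover have "\<forall>i\<le>stratum_dim s p. c i \<in> T" using c(1) T(1) by blast
  ultimately show ?thesis using has_chain_extend_below[OF _ c(2) T(2)] by blast
qed

lemma stratum_dim_strict_antimono:
  assumes dim: "krull_dim TYPE('a::comm_ring_1) = enat d"
    and "p \<in> Spec" "(q::'a set) \<in> Spec" "q \<subset> p" "s \<in> q \<or> s \<notin> p"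
  shows "stratum_dim s p < stratum_dim s q"
proof -
  have "stratum_above s p \<subseteq> stratum_above s q"
    using assms(4,5) unfolding stratum_above_def by blast
  moreover have "q \<in> stratum_above s q" using \<open>q \<in> Spec\<close> unfolding stratum_above_def by blast
  ultimately have "has_chain (stratum_above s q) (Suc (stratum_dim s p))"
    by (rule has_chain_extend_stratum_dim[OF dim \<open>p \<in> Spec\<close> _ _ \<open>q \<subset> p\<close>])
  from stratum_dim_greatest[where s = s, OF dim \<open>q \<in> Spec\<close> this] show ?thesis by simp
qed

lemma stratum_dim_eq_dim_quotient:
  assumes "krull_dim TYPE('a::comm_ring_1) = enat d" "(p::'a set) \<in> Spec" "s \<in> p"
  shows "enat (stratum_dim s p) = dim_quotient p"
proof -
  have "stratum_above s p = {P \<in> Spec. p \<subseteq> P}"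
    using assms(3) unfolding stratum_above_def by blast
  then show ?thesis
    using chain_dim_stratum_above[where s = s, OF assms(1,2)] unfolding dim_quotient_def by simp
qed

lemma stratum_dim_le_dim_localization:
  assumes "krull_dim TYPE('a::comm_ring_1) = enat d" "(p::'a set) \<in> Spec" "s \<notin> p"
  shows "enat (stratum_dim s p) \<le> dim_localization s"
proof -
  have "stratum_above s p \<subseteq> {P \<in> Spec. s \<notin> P}"
    using assms(3) unfolding stratum_above_def by blast
  then have "has_chain {P \<in> Spec. s \<notin> P} (stratum_dim s p)"
    using has_chain_stratum_dim[where s = s, OF assms(1,2)] has_chain_mono by blast
  then show ?thesis unfolding dim_localization_def chain_dim_def by (intro Sup_upper) blast
qed

lemma stratum_dim_less_krull_dim:
  assumes noeth: "noetherian_ring TYPE('a::comm_ring_1)"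
    and dim: "krull_dim TYPE('a) = enat d"
    and nzd: "\<forall>x::'a. s * x = 0 \<longrightarrow> x = 0"
    and p: "p \<in> Spec" and sp: "s \<in> p"
  shows "stratum_dim s p + 1 \<le> d"
proof -
  obtain q where q: "q \<in> Spec" "q \<subset> p"
    using nonzerodivisor_prime_not_minimal[OF noeth nzd p sp] by blast
  have "stratum_above s p \<subseteq> Spec" unfolding stratum_above_def by blast
  then have "has_chain (Spec::'a set set) (Suc (stratum_dim s p))"
    by (rule has_chain_extend_stratum_dim[OF dim p _ q])
  from has_chain_le_krull_dim[OF dim subset_refl this] show ?thesis by simp
qed

lemma dll_minimal_subset_minimal_primes:
  assumes I: "is_ideal I"
    and strict: "\<And>p q. p \<in> Spec \<Longrightarrow> q \<in> Spec \<Longrightarrow> q \<subset> p \<Longrightarrow> s \<in> q \<or> s \<notin> p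
      \<Longrightarrow> \<delta> p < \<delta> q"
  shows "dll_minimal \<delta> (V I \<inter> Spec) \<subseteq> minimal_primes I \<union> minimal_primes (ideal_adjoin I s)"
proof
  fix p assume "p \<in> dll_minimal \<delta> (V I \<inter> Spec)"
  then have pV: "p \<in> V I" and p: "p \<in> Spec"
    and no_smaller: "\<And>q. q \<in> V I \<Longrightarrow> q \<subset> p \<Longrightarrow> \<not> \<delta> p < \<delta> q"
    unfolding dll_minimal_def dll_def V_def by auto
  have below: "s \<in> p \<and> s \<notin> q" if "q \<in> V I" "q \<subset> p" for q
    using strict[OF p _ that(2)] no_smaller[OF that] that(1) unfolding V_def by blast
  show "p \<in> minimal_primes I \<union> minimal_primes (ideal_adjoin I s)"
  proof (cases "p \<in> minimal_primes I")
    case False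
    then obtain q where "q \<in> V I" "q \<subset> p" using pV unfolding minimal_primes_def by blast
    then have "s \<in> p" using below by blast
    then have "p \<in> V (ideal_adjoin I s)"
      using ideal_adjoin_least[OF prime_ideal_is_ideal] pV unfolding V_def Spec_def by blast
    moreover have "q \<in> V I" "s \<in> q" if "q \<in> V (ideal_adjoin I s)" for q
      using that ideal_adjoin_subset ideal_adjoin_mem[OF I] unfolding V_def by blast+
    ultimately have "p \<in> minimal_primes (ideal_adjoin I s)"
      using below unfolding minimal_primes_def by blast
    then show ?thesis by blast
  qed blast
qed

lemma gen_dim_fun_if_strict_on_strata:
  assumes noeth: "noetherian_ring TYPE('a::comm_ring_1)"
    and strict: "\<And>p q. p \<in> Spec \<Longrightarrow> q \<in> Spec \<Longrightarrow> q \<subset> p \<Longrightarrow> s \<in> q \<or> s \<notin> p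
      \<Longrightarrow> \<delta> p < \<delta> q"
  shows "gen_dim_fun (Spec::'a set set) \<delta>"
  unfolding gen_dim_fun_def
proof (intro conjI allI impI subset_refl)
  fix I :: "'a set" assume I: "is_ideal I"
  have "dll_minimal \<delta> (V I \<inter> Spec) \<subseteq> minimal_primes I \<union> minimal_primes (ideal_adjoin I s)"
    by (rule dll_minimal_subset_minimal_primes[OF I]) (rule strict)
  moreover have "finite (minimal_primes I \<union> minimal_primes (ideal_adjoin I s))"
    using finite_minimal_primes[OF noeth I] finite_minimal_primes[OF noeth is_ideal_adjoin[OF I]] by simp
  ultimately show "finite (dll_minimal \<delta> (V I \<inter> Spec))" by (rule finite_subset)
qed

theorem mainTheorem3:
  fixes s :: "'a::comm_ring_1" and d :: nat
  assumes noeth: "noetherian_ring TYPE('a)"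
    and dim: "krull_dim TYPE('a) = enat d"
    and nzd: "\<forall>x::'a. s * x = 0 \<longrightarrow> x = 0"
    and loc: "dim_localization s + 1 \<le> enat d"
  shows "\<exists>\<delta> :: 'a set \<Rightarrow> nat. gen_dim_fun Spec \<delta>
           \<and> (\<forall>p\<in>Spec. \<delta> p + 1 \<le> d)
           \<and> (\<forall>p\<in>Spec. s \<in> p \<longrightarrow> enat (\<delta> p) = dim_quotient p)"
proof (intro exI[of _ "stratum_dim s"] conjI ballI impI)
  show "gen_dim_fun Spec (stratum_dim s)"
    by (rule gen_dim_fun_if_strict_on_strata[OF noeth]) (rule stratum_dim_strict_antimono[OF dim])
next
  fix p :: "'a set" assume p: "p \<in> Spec"
  show "stratum_dim s p + 1 \<le> d"
  proof (cases "s \<in> p")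
    case False
    then have "enat (stratum_dim s p) + 1 \<le> enat d"
      using stratum_dim_le_dim_localization[OF dim p] loc by (meson add_right_mono order_trans)
    then show ?thesis by (simp add: one_enat_def)
  qed (rule stratum_dim_less_krull_dim[OF noeth dim nzd p])
  show "s \<in> p \<Longrightarrow> enat (stratum_dim s p) = dim_quotient p"
    using stratum_dim_eq_dim_quotient[OF dim p] .
qed

end
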